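(* (i) For all contexts $\Gamma,\Delta$: if $\Gamma\approx_\alpha\Delta$ and $\Gamma\ \mathrm{ok}$ then $\Delta\ \mathrm{ok}$. (ii) For all contexts $\Gamma,\Delta$ and terms $M,N,A$: if $\Gamma\approx_\alpha\Delta$, $M\sim_\alpha N$ and $\Gamma\vdash M:A$, then $\Delta\vdash N:A$.
   Context: Let $\mathcal V$ (the variables) be a type with decidable equality, equipped with functions $\mathrm{encode}:\mathcal V\to\mathbb N$ and $\mathrm{decode}:\mathbb N\to\mathcal V$ such that $\mathrm{encode}(\mathrm{decode}\,n)=n$ for all $n$. Let $\mathcal C$ (the constants) be any type. Terms $\Lambda$ are generated by: $c\,k$ ($k\in\mathcal C$), $v\,x$ ($x\in\mathcal V$), $\lambda[x:A]M$, $\Pi[x:A]B$ and $M\cdot N$; in $\lambda[x:A]M$ and $\Pi[x:A]B$ the name $x$ binds in $M$ (resp. $B$) but not in $A$. Terms are raw first-order syntax (not identified up to renaming of bound variables) and $\equiv$ denotes syntactic identity. The list of free variables is $\mathrm{fv}(c\,k)=[\,]$, $\mathrm{fv}(v\,x)=[x]$, $\mathrm{fv}(\lambda[x:A]M)=\mathrm{fv}\,A\mathbin{+\!\!+}(\mathrm{fv}\,M-x)$, $\mathrm{fv}(\Pi[x:A]B)=\mathrm{fv}\,A\mathbin{+\!\!+}(\mathrm{fv}\,B-x)$, $\mathrm{fv}(M\cdot N)=\mathrm{fv}\,M\mathbin{+\!\!+}\mathrm{fv}\,N$, where $\mathbin{+\!\!+}$ is list concatenation and $xs-x$ deletes every occurrence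 of $x$ from $xs$. Fix a function $\chi':\mathrm{List}\,\mathbb N\to\mathbb N$ with $\chi'(ns)\notin ns$ for every list $ns$, and put $X'(xs)=\mathrm{decode}(\chi'(\mathrm{map}\ \mathrm{encode}\ xs))$. A substitution is any function $\sigma:\mathcal V\to\Lambda$; $\iota=v$ is the identity substitution; $(\sigma,x:=N)(y)=N$ if $y=x$ and $\sigma\,y$ otherwise. For a substitution $\sigma$ and a list $xs$ of variables, $X(\sigma,xs)=X'(\text{concatenation of the lists }\mathrm{fv}(\sigma\,y)\text{ for }y\in xs)$. The action $M\bullet\sigma$ is defined by structural recursion: $c\,k\bullet\sigma=c\,k$; $v\,x\bullet\sigma=\sigma\,x$; $(M\cdot N)\bullet\sigma=(M\bullet\sigma)\cdot(N\bullet\sigma)$; $(\lambda[x:A]M)\bullet\sigma=\lambda[y:A\bullet\sigma](M\bullet(\sigma,x:=v\,y))$ with $y=X(\sigma,\mathrm{fv}\,M-x)$; $(\Pi[x:A]B)\bullet\sigma=\Pi[y:A\bullet\sigma](B\bullet(\sigma,x:=v\,y))$ with $y=X(\sigma,\mathrm{fv}\,B-x)$. Unary substitution is $M[x:=N]=M\bullet(\iota,x:=N)$. $\alpha$-conversion $\sim_\alpha$ is the inductively defined relation with rules: $c\,k\sim_\alpha c\,k$; $v\,x\sim_\alpha v\,x$; $M\cdot N\sim_\alpha M'\cdot N'$ if $M\sim_\alpha M'$ and $N\sim_\alpha N'$; $\lambda[x:A]M\sim_\alpha\lambda[x':A']M'$ if $A\sim_\alpha A'$ and there is a variable $y$ with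 $y\notin\mathrm{fv}\,M-x$, $y\notin\mathrm{fv}\,M'-x'$ and $M[x:=v\,y]\equiv M'[x':=v\,y]$; and the same rule with $\Pi$ in place of $\lambda$. $\beta$-contraction is $(\lambda[x:A]M)\cdot N\ \triangleright_\beta\ M[x:=N]$. One-step $\beta$-reduction $\to_\beta$ is its contextual closure, inductively: $M\to_\beta N$ if $M\triangleright_\beta N$; $\lambda[x:A]M\to_\beta\lambda[x:A]M'$ and $\Pi[x:A]M\to_\beta\Pi[x:A]M'$ if $M\to_\beta M'$; $\lambda[x:A]M\to_\beta\lambda[x:A']M$ and $\Pi[x:A]M\to_\beta\Pi[x:A']M$ if $A\to_\beta A'$; $M\cdot P\to_\beta N\cdot P$ and $P\cdot M\to_\beta P\cdot N$ if $M\to_\beta N$. $\beta$-conversion $\simeq_\beta$ is the equivalence (reflexive–symmetric–transitive) closure of $\sim_\alpha\cup\to_\beta$. Pure Type System: fix a binary relation $\mathcal A\subseteq\mathcal C\times\mathcal C$ (axioms) and a ternary relation $\mathcal R\subseteq\mathcal C\times\mathcal C\times\mathcal C$ (rules). A context is a finite list of pairs $(x,A)$ with $x\in\mathcal V$, $A\in\Lambda$; $\Gamma,x:A$ denotes the list $(x,A)::\Gamma$; $\mathrm{dom}\,\Gamma$ is the list of first components; $(x,A)\in\Gamma$ is list membership. The judgments $\Gamma\ \mathrm{ok}$ and $\Gamma\vdash M:A$ are defined mutually inductively by: (nil) $[\,]\ \mathrm{ok}$; (cons) if $\Gamma\ \mathrm{ok}$, $\Gamma\vdash A:c\,s$ and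 $x\notin\mathrm{dom}\,\Gamma$ then $\Gamma,x:A\ \mathrm{ok}$; (sort) if $\Gamma\ \mathrm{ok}$ and $\mathcal A\,s_1\,s_2$ then $\Gamma\vdash c\,s_1:c\,s_2$; (var) if $\Gamma\ \mathrm{ok}$ and $(x,A)\in\Gamma$ then $\Gamma\vdash v\,x:A$; (prod) if $\mathcal R\,s_1\,s_2\,s_3$, $\Gamma\vdash A:c\,s_1$ and for every $y\notin\mathrm{dom}\,\Gamma$, $\Gamma,y:A\vdash B[x:=v\,y]:c\,s_2$, then $\Gamma\vdash\Pi[x:A]B:c\,s_3$; (abs) if $\mathcal R\,s_1\,s_2\,s_3$, $\Gamma\vdash A:c\,s_1$, for every $z\notin\mathrm{dom}\,\Gamma$, $\Gamma,z:A\vdash B[y:=v\,z]:c\,s_2$, and for every $z\notin\mathrm{dom}\,\Gamma$, $\Gamma,z:A\vdash M[x:=v\,z]:B[y:=v\,z]$, then $\Gamma\vdash\lambda[x:A]M:\Pi[y:A]B$; (app) if $\Gamma\vdash M:\Pi[x:A]B$, $\Gamma\vdash N:A$ and $\Gamma\vdash B[x:=N]:c\,s$ for some $s$, then $\Gamma\vdash M\cdot N:B[x:=N]$; (conv) if $\Gamma\vdash M:A$, $A\simeq_\beta B$ and $\Gamma\vdash B:c\,s$ for some $s$, then $\Gamma\vdash M:B$. (The premises quantified over all fresh names in (prod) and (abs) are infinitely branching.) $\Gamma\approx_\alpha\Delta$ means: $\Gamma$ and $\Delta$ have the same length and, position by position, the entries $(x,A)$ of $\Gamma$ and $(y,B)$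 of $\Delta$ satisfy $x=y$ and $A\sim_\alpha B$. *)

theory Defs
  imports Main
begin

datatype ('c, 'v) trm =
    Const 'c
  | Var 'v
  | Lam 'v "('c, 'v) trm" "('c, 'v) trm"   (* Lam x A M  =  lambda[x:A] M *)
  | Pi 'v "('c, 'v) trm" "('c, 'v) trm"    (* Pi x A B   =  Pi[x:A] B *)
  | App "('c, 'v) trm" "('c, 'v) trm"

primrec fv :: "('c, 'v) trm \<Rightarrow> 'v list" where
  "fv (Const k) = []"
| "fv (Var x) = [x]"
| "fv (Lam x A M) = fv A @ removeAll x (fv M)"
| "fv (Pi x A B) = fv A @ removeAll x (fv B)"
| "fv (App M N) = fv M @ fv N"

definition Xp :: "('v \<Rightarrow> nat) \<Rightarrow> (nat \<Rightarrow> 'v) \<Rightarrow> (nat list \<Rightarrow> nat) \<Rightarrow> 'v list \<Rightarrow> 'v" where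
  "Xp enc dec chi xs = dec (chi (map enc xs))"

definition Xs :: "('v \<Rightarrow> nat) \<Rightarrow> (nat \<Rightarrow> 'v) \<Rightarrow> (nat list \<Rightarrow> nat)
    \<Rightarrow> ('v \<Rightarrow> ('c, 'v) trm) \<Rightarrow> 'v list \<Rightarrow> 'v" where
  "Xs enc dec chi \<sigma> xs = Xp enc dec chi (concat (map (\<lambda>y. fv (\<sigma> y)) xs))"

definition supd :: "('v \<Rightarrow> ('c, 'v) trm) \<Rightarrow> 'v \<Rightarrow> ('c, 'v) trm \<Rightarrow> 'v \<Rightarrow> ('c, 'v) trm" where
  "supd \<sigma> x N = (\<lambda>y. if y = x then N else \<sigma> y)"

primrec sapp :: "('v \<Rightarrow> nat) \<Rightarrow> (nat \<Rightarrow> 'v) \<Rightarrow> (nat list \<Rightarrow> nat)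
    \<Rightarrow> ('c, 'v) trm \<Rightarrow> ('v \<Rightarrow> ('c, 'v) trm) \<Rightarrow> ('c, 'v) trm" where
  "sapp enc dec chi (Const k) \<sigma> = Const k"
| "sapp enc dec chi (Var x) \<sigma> = \<sigma> x"
| "sapp enc dec chi (App M N) \<sigma> = App (sapp enc dec chi M \<sigma>) (sapp enc dec chi N \<sigma>)"
| "sapp enc dec chi (Lam x A M) \<sigma> =
     (let y = Xs enc dec chi \<sigma> (removeAll x (fv M))
      in Lam y (sapp enc dec chi A \<sigma>) (sapp enc dec chi M (supd \<sigma> x (Var y))))"
| "sapp enc dec chi (Pi x A B) \<sigma> =
     (let y = Xs enc dec chi \<sigma> (removeAll x (fv B))
      in Pi y (sapp enc dec chi A \<sigma>) (sapp enc dec chi B (supd \<sigma> x (Var y))))"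

definition subst1 :: "('v \<Rightarrow> nat) \<Rightarrow> (nat \<Rightarrow> 'v) \<Rightarrow> (nat list \<Rightarrow> nat)
    \<Rightarrow> ('c, 'v) trm \<Rightarrow> 'v \<Rightarrow> ('c, 'v) trm \<Rightarrow> ('c, 'v) trm" where
  "subst1 enc dec chi M x N = sapp enc dec chi M (supd Var x N)"

inductive alpha :: "('v \<Rightarrow> nat) \<Rightarrow> (nat \<Rightarrow> 'v) \<Rightarrow> (nat list \<Rightarrow> nat)
    \<Rightarrow> ('c, 'v) trm \<Rightarrow> ('c, 'v) trm \<Rightarrow> bool"
  for enc dec chi where
  a_const: "alpha enc dec chi (Const k) (Const k)"
| a_var: "alpha enc dec chi (Var x) (Var x)"
| a_app: "alpha enc dec chi M M' \<Longrightarrow> alpha enc dec chi N N'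
          \<Longrightarrow> alpha enc dec chi (App M N) (App M' N')"
| a_lam: "alpha enc dec chi A A' \<Longrightarrow> y \<notin> set (removeAll x (fv M)) \<Longrightarrow>
          y \<notin> set (removeAll x' (fv M')) \<Longrightarrow>
          subst1 enc dec chi M x (Var y) = subst1 enc dec chi M' x' (Var y) \<Longrightarrow>
          alpha enc dec chi (Lam x A M) (Lam x' A' M')"
| a_pi: "alpha enc dec chi A A' \<Longrightarrow> y \<notin> set (removeAll x (fv M)) \<Longrightarrow>
          y \<notin> set (removeAll x' (fv M')) \<Longrightarrow>
          subst1 enc dec chi M x (Var y) = subst1 enc dec chi M' x' (Var y) \<Longrightarrow>
          alpha enc dec chi (Pi x A M) (Pi x' A' M')"

inductive beta :: "('v \<Rightarrow> nat) \<Rightarrow> (nat \<Rightarrow> 'v) \<Rightarrow> (nat list \<Rightarrow> nat)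
    \<Rightarrow> ('c, 'v) trm \<Rightarrow> ('c, 'v) trm \<Rightarrow> bool"
  for enc dec chi where
  b_contr: "beta enc dec chi (App (Lam x A M) N) (subst1 enc dec chi M x N)"
| b_lam_body: "beta enc dec chi M M' \<Longrightarrow> beta enc dec chi (Lam x A M) (Lam x A M')"
| b_pi_body: "beta enc dec chi M M' \<Longrightarrow> beta enc dec chi (Pi x A M) (Pi x A M')"
| b_lam_ty: "beta enc dec chi A A' \<Longrightarrow> beta enc dec chi (Lam x A M) (Lam x A' M)"
| b_pi_ty: "beta enc dec chi A A' \<Longrightarrow> beta enc dec chi (Pi x A M) (Pi x A' M)"
| b_app_l: "beta enc dec chi M N \<Longrightarrow> beta enc dec chi (App M P) (App N P)"
| b_app_r: "beta enc dec chi M N \<Longrightarrow> beta enc dec chi (App P M) (App P N)"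

definition betaconv :: "('v \<Rightarrow> nat) \<Rightarrow> (nat \<Rightarrow> 'v) \<Rightarrow> (nat list \<Rightarrow> nat)
    \<Rightarrow> ('c, 'v) trm \<Rightarrow> ('c, 'v) trm \<Rightarrow> bool" where
  "betaconv enc dec chi = equivclp (sup (alpha enc dec chi) (beta enc dec chi))"

type_synonym ('c, 'v) ctx = "('v \<times> ('c, 'v) trm) list"

inductive ctx_ok :: "('v \<Rightarrow> nat) \<Rightarrow> (nat \<Rightarrow> 'v) \<Rightarrow> (nat list \<Rightarrow> nat)
      \<Rightarrow> ('c \<Rightarrow> 'c \<Rightarrow> bool) \<Rightarrow> ('c \<Rightarrow> 'c \<Rightarrow> 'c \<Rightarrow> bool) \<Rightarrow> ('c, 'v) ctx \<Rightarrow> bool"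
  and typing :: "('v \<Rightarrow> nat) \<Rightarrow> (nat \<Rightarrow> 'v) \<Rightarrow> (nat list \<Rightarrow> nat)
      \<Rightarrow> ('c \<Rightarrow> 'c \<Rightarrow> bool) \<Rightarrow> ('c \<Rightarrow> 'c \<Rightarrow> 'c \<Rightarrow> bool)
      \<Rightarrow> ('c, 'v) ctx \<Rightarrow> ('c, 'v) trm \<Rightarrow> ('c, 'v) trm \<Rightarrow> bool"
  for enc dec chi Ax Rl where
  t_nil: "ctx_ok enc dec chi Ax Rl []"
| t_cons: "ctx_ok enc dec chi Ax Rl \<Gamma> \<Longrightarrow> typing enc dec chi Ax Rl \<Gamma> A (Const s) \<Longrightarrow>
           x \<notin> set (map fst \<Gamma>) \<Longrightarrow> ctx_ok enc dec chi Ax Rl ((x, A) # \<Gamma>)"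
| t_sort: "ctx_ok enc dec chi Ax Rl \<Gamma> \<Longrightarrow> Ax s1 s2 \<Longrightarrow>
           typing enc dec chi Ax Rl \<Gamma> (Const s1) (Const s2)"
| t_var: "ctx_ok enc dec chi Ax Rl \<Gamma> \<Longrightarrow> (x, A) \<in> set \<Gamma> \<Longrightarrow>
           typing enc dec chi Ax Rl \<Gamma> (Var x) A"
| t_prod: "Rl s1 s2 s3 \<Longrightarrow> typing enc dec chi Ax Rl \<Gamma> A (Const s1) \<Longrightarrow>
           (\<forall>y. y \<notin> set (map fst \<Gamma>) \<longrightarrow>
              typing enc dec chi Ax Rl ((y, A) # \<Gamma>) (subst1 enc dec chi B x (Var y)) (Const s2)) \<Longrightarrow>
           typing enc dec chi Ax Rl \<Gamma> (Pi x A B) (Const s3)"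
| t_abs: "Rl s1 s2 s3 \<Longrightarrow> typing enc dec chi Ax Rl \<Gamma> A (Const s1) \<Longrightarrow>
           (\<forall>z. z \<notin> set (map fst \<Gamma>) \<longrightarrow>
              typing enc dec chi Ax Rl ((z, A) # \<Gamma>) (subst1 enc dec chi B y (Var z)) (Const s2)) \<Longrightarrow>
           (\<forall>z. z \<notin> set (map fst \<Gamma>) \<longrightarrow>
              typing enc dec chi Ax Rl ((z, A) # \<Gamma>) (subst1 enc dec chi M x (Var z))
                 (subst1 enc dec chi B y (Var z))) \<Longrightarrow>
           typing enc dec chi Ax Rl \<Gamma> (Lam x A M) (Pi y A B)"
| t_app: "typing enc dec chi Ax Rl \<Gamma> M (Pi x A B) \<Longrightarrow> typing enc dec chi Ax Rl \<Gamma> N A \<Longrightarrow>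
           typing enc dec chi Ax Rl \<Gamma> (subst1 enc dec chi B x N) (Const s) \<Longrightarrow>
           typing enc dec chi Ax Rl \<Gamma> (App M N) (subst1 enc dec chi B x N)"
| t_conv: "typing enc dec chi Ax Rl \<Gamma> M A \<Longrightarrow> betaconv enc dec chi A B \<Longrightarrow>
           typing enc dec chi Ax Rl \<Gamma> B (Const s) \<Longrightarrow> typing enc dec chi Ax Rl \<Gamma> M B"

definition ctx_alpha :: "('v \<Rightarrow> nat) \<Rightarrow> (nat \<Rightarrow> 'v) \<Rightarrow> (nat list \<Rightarrow> nat)
    \<Rightarrow> ('c, 'v) ctx \<Rightarrow> ('c, 'v) ctx \<Rightarrow> bool" where
  "ctx_alpha enc dec chi \<Gamma> \<Delta> =
     list_all2 (\<lambda>(x, A) (y, B). x = y \<and> alpha enc dec chi A B) \<Gamma> \<Delta>"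

end

theory Submission
  imports Defs
begin

(* Substitution renames every binder to a name computed from the free variables of the
   substituted terms alone, so it never looks at the names of bound variables:
   alpha-equivalent terms have syntactically identical substitution instances.  In particular
   the bodies of alpha-equivalent binders agree after opening with any variable, not only with
   the witness of the alpha rule, so the infinitely branching premises of (prod) and (abs)
   transfer verbatim, and both statements follow by one simultaneous induction on derivations.
   What remains is that a type, in the context or as the domain of a binder, may be replaced by
   an alpha-equivalent one; as alpha-conversion is contained in beta-conversion, (conv) absorbs
   this once the original type is known to be sorted in the new context.  For the variable
   rule this information comes from the context: the induction for contexts carries along that
   every type of the context is sorted in each alpha-equivalent context, which uses weakening. *)

lemma concat_map_concat:
  "concat (map f (concat (map g xs))) = concat (map (\<lambda>x. concat (map f (g x))) xs)"
  by (induction xs) auto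

locale pts_signature =
  fixes enc :: "'v \<Rightarrow> nat" and dec :: "nat \<Rightarrow> 'v" and chi :: "nat list \<Rightarrow> nat"
    and Ax :: "'c \<Rightarrow> 'c \<Rightarrow> bool" and Rl :: "'c \<Rightarrow> 'c \<Rightarrow> 'c \<Rightarrow> bool"
begin

abbreviation sapp_syntax :: "('c, 'v) trm \<Rightarrow> ('v \<Rightarrow> ('c, 'v) trm) \<Rightarrow> ('c, 'v) trm"
    (infixl "\<bullet>" 75)
  where "M \<bullet> \<sigma> \<equiv> sapp enc dec chi M \<sigma>"

abbreviation subst1_syntax :: "('c, 'v) trm \<Rightarrow> 'v \<Rightarrow> ('c, 'v) trm \<Rightarrow> ('c, 'v) trm"
    ("_[_ ::= _]" [1000, 0, 0] 1000)
  where "M[x ::= N] \<equiv> subst1 enc dec chi M x N"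

abbreviation alpha_syntax :: "('c, 'v) trm \<Rightarrow> ('c, 'v) trm \<Rightarrow> bool" (infix "=\<^sub>\<alpha>" 50)
  where "M =\<^sub>\<alpha> N \<equiv> alpha enc dec chi M N"

abbreviation ctx_alpha_syntax :: "('c, 'v) ctx \<Rightarrow> ('c, 'v) ctx \<Rightarrow> bool" (infix "\<approx>\<^sub>\<alpha>" 50)
  where "\<Gamma> \<approx>\<^sub>\<alpha> \<Delta> \<equiv> ctx_alpha enc dec chi \<Gamma> \<Delta>"

abbreviation betaconv_syntax :: "('c, 'v) trm \<Rightarrow> ('c, 'v) trm \<Rightarrow> bool" (infix "\<simeq>\<^sub>\<beta>" 50)
  where "A \<simeq>\<^sub>\<beta> B \<equiv> betaconv enc dec chi A B"

abbreviation ok :: "('c, 'v) ctx \<Rightarrow> bool"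
  where "ok \<Gamma> \<equiv> ctx_ok enc dec chi Ax Rl \<Gamma>"

abbreviation typing_syntax :: "('c, 'v) ctx \<Rightarrow> ('c, 'v) trm \<Rightarrow> ('c, 'v) trm \<Rightarrow> bool"
    ("_ \<turnstile> _ : _" [60, 60, 60] 60)
  where "\<Gamma> \<turnstile> M : A \<equiv> typing enc dec chi Ax Rl \<Gamma> M A"

abbreviation fresh_binder :: "('v \<Rightarrow> ('c, 'v) trm) \<Rightarrow> 'v \<Rightarrow> ('c, 'v) trm \<Rightarrow> 'v"
  where "fresh_binder \<sigma> x M \<equiv> Xs enc dec chi \<sigma> (removeAll x (fv M))"

end

locale pts = pts_signature enc dec chi Ax Rl
  for enc :: "'v \<Rightarrow> nat" and dec and chi and Ax :: "'c \<Rightarrow> 'c \<Rightarrow> bool" and Rl +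
  assumes enc_dec: "\<And>n. enc (dec n) = n"
    and chi_fresh: "\<And>ns. chi ns \<notin> set ns"

section \<open>Substitution\<close>

context pts_signature
begin

lemma Xs_cong: "(\<And>z. z \<in> set xs \<Longrightarrow> fv (\<sigma> z) = fv (\<tau> z)) \<Longrightarrow> Xs enc dec chi \<sigma> xs = Xs enc dec chi \<tau> xs"
proof -
  assume "\<And>z. z \<in> set xs \<Longrightarrow> fv (\<sigma> z) = fv (\<tau> z)"
  then have "map (\<lambda>y. fv (\<sigma> y)) xs = map (\<lambda>y. fv (\<tau> y)) xs" by simp
  then show ?thesis unfolding Xs_def by (simp only:)
qed

lemma sapp_cong: "(\<And>z. z \<in> set (fv M) \<Longrightarrow> \<sigma> z = \<tau> z) \<Longrightarrow> M \<bullet> \<sigma> = M \<bullet> \<tau>"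
proof (induction M arbitrary: \<sigma> \<tau>)
  case (App M N)
  have "M \<bullet> \<sigma> = M \<bullet> \<tau>" "N \<bullet> \<sigma> = N \<bullet> \<tau>" using App.prems by (auto intro!: App.IH)
  then show ?case by simp
next
  case (Lam x A M)
  have "fresh_binder \<sigma> x M = fresh_binder \<tau> x M" using Lam.prems by (auto intro!: Xs_cong)
  moreover have "A \<bullet> \<sigma> = A \<bullet> \<tau>" "M \<bullet> supd \<sigma> x P = M \<bullet> supd \<tau> x P" for P
    using Lam.prems by (auto simp: supd_def intro!: Lam.IH)
  ultimately show ?case by (simp add: Let_def)
next
  case (Pi x A M)
  have "fresh_binder \<sigma> x M = fresh_binder \<tau> x M" using Pi.prems by (auto intro!: Xs_cong)
  moreover have "A \<bullet> \<sigma> = A \<bullet> \<tau>" "M \<bullet> supd \<sigma> x P = M \<bullet> supd \<tau> x P" for P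
    using Pi.prems by (auto simp: supd_def intro!: Pi.IH)
  ultimately show ?case by (simp add: Let_def)
qed simp_all

end

context pts
begin

lemma Xp_fresh: "Xp enc dec chi xs \<notin> set xs"
proof
  assume "Xp enc dec chi xs \<in> set xs"
  then have "enc (dec (chi (map enc xs))) \<in> set (map enc xs)" unfolding Xp_def by simp
  then show False using enc_dec chi_fresh[of "map enc xs"] by simp
qed

lemma Xs_fresh: "z \<in> set xs \<Longrightarrow> Xs enc dec chi \<sigma> xs \<notin> set (fv (\<sigma> z))"
  using Xp_fresh[of "concat (map (\<lambda>y. fv (\<sigma> y)) xs)"] unfolding Xs_def by auto

lemma removeAll_fv_supd:
  assumes "\<forall>w\<in>set (removeAll x xs). y \<notin> set (fv (\<sigma> w))"
  shows "removeAll y (concat (map (\<lambda>w. fv (supd \<sigma> x (Var y) w)) xs))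
      = concat (map (\<lambda>w. fv (\<sigma> w)) (removeAll x xs))"
  using assms by (induction xs) (auto simp: supd_def removeAll_append)

lemma removeAll_fv_supd_fresh_binder:
  "removeAll (fresh_binder \<sigma> x M)
      (concat (map (\<lambda>w. fv (supd \<sigma> x (Var (fresh_binder \<sigma> x M)) w)) (fv M)))
      = concat (map (\<lambda>w. fv (\<sigma> w)) (removeAll x (fv M)))"
  by (rule removeAll_fv_supd) (simp add: Xs_fresh)

lemma fv_sapp: "fv (M \<bullet> \<sigma>) = concat (map (\<lambda>z. fv (\<sigma> z)) (fv M))"
  by (induction M arbitrary: \<sigma>) (simp_all add: Let_def removeAll_fv_supd_fresh_binder)

lemma fresh_binder_sapp:
  "Xs enc dec chi \<tau> (removeAll (fresh_binder \<sigma> x M) (fv (M \<bullet> supd \<sigma> x (Var (fresh_binder \<sigma> x M)))))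
      = fresh_binder (\<lambda>z. \<sigma> z \<bullet> \<tau>) x M"
proof -
  have "removeAll (fresh_binder \<sigma> x M) (fv (M \<bullet> supd \<sigma> x (Var (fresh_binder \<sigma> x M))))
      = concat (map (\<lambda>w. fv (\<sigma> w)) (removeAll x (fv M)))"
    by (simp only: fv_sapp removeAll_fv_supd_fresh_binder)
  then show ?thesis by (simp add: Xs_def fv_sapp concat_map_concat)
qed

lemma sapp_supd_fresh_binder:
  "M \<bullet> (\<lambda>z. supd \<sigma> x (Var (fresh_binder \<sigma> x M)) z \<bullet> supd \<tau> (fresh_binder \<sigma> x M) P)
      = M \<bullet> supd (\<lambda>z. \<sigma> z \<bullet> \<tau>) x P"
proof (rule sapp_cong)
  fix w assume w: "w \<in> set (fv M)"
  show "supd \<sigma> x (Var (fresh_binder \<sigma> x M)) w \<bullet> supd \<tau> (fresh_binder \<sigma> x M) P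
      = supd (\<lambda>z. \<sigma> z \<bullet> \<tau>) x P w"
  proof (cases "w = x")
    case False
    with w have "fresh_binder \<sigma> x M \<notin> set (fv (\<sigma> w))" by (simp add: Xs_fresh)
    with False show ?thesis by (auto simp: supd_def intro!: sapp_cong)
  qed (simp add: supd_def)
qed

lemma sapp_sapp: "M \<bullet> \<sigma> \<bullet> \<tau> = M \<bullet> (\<lambda>z. \<sigma> z \<bullet> \<tau>)"
  by (induction M arbitrary: \<sigma> \<tau>) (simp_all add: Let_def fresh_binder_sapp sapp_supd_fresh_binder)

lemma fv_subst_Var:
  assumes "z \<notin> set (removeAll x (fv M))"
  shows "removeAll z (fv (M[x ::= Var z])) = removeAll x (fv M)"
proof -
  have "removeAll z (concat (map (\<lambda>w. fv (supd (Var :: 'v \<Rightarrow> ('c, 'v) trm) x (Var z) w)) (fv M)))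
      = concat (map (\<lambda>w. fv (Var w :: ('c, 'v) trm)) (removeAll x (fv M)))"
    by (rule removeAll_fv_supd) (use assms in auto)
  then show ?thesis by (simp add: subst1_def fv_sapp)
qed

lemma subst_Var_sapp:
  assumes "z \<notin> set (removeAll x (fv M))"
  shows "M[x ::= Var z] \<bullet> supd \<sigma> z P = M \<bullet> supd \<sigma> x P"
  unfolding subst1_def sapp_sapp using assms by (auto simp: supd_def intro!: sapp_cong)

end

section \<open>Alpha-conversion\<close>

context pts
begin

lemma common_renaming:
  assumes "y \<notin> set (removeAll x (fv M))" and "y \<notin> set (removeAll x' (fv M'))"
    and "M[x ::= Var y] = M'[x' ::= Var y]"
  shows common_renaming_fv: "removeAll x (fv M) = removeAll x' (fv M')"
    and common_renaming_sapp: "M \<bullet> supd \<sigma> x P = M' \<bullet> supd \<sigma> x' P"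
  using assms by (metis fv_subst_Var, metis subst_Var_sapp)

lemma common_renaming_subst:
  assumes "y \<notin> set (removeAll x (fv M))" and "y \<notin> set (removeAll x' (fv M'))"
    and "M[x ::= Var y] = M'[x' ::= Var y]"
  shows "M[x ::= Var z] = M'[x' ::= Var z]"
  using common_renaming_sapp[OF assms, of Var "Var z"] by (simp only: subst1_def)

lemma alpha_fv: "M =\<^sub>\<alpha> N \<Longrightarrow> fv M = fv N"
proof (induction rule: alpha.induct)
  case (a_lam A A' y x M x' M')
  then show ?case using common_renaming_fv[OF a_lam.hyps(2-4)] by simp
next
  case (a_pi A A' y x M x' M')
  then show ?case using common_renaming_fv[OF a_pi.hyps(2-4)] by simp
qed simp_all

lemma alpha_sapp: "M =\<^sub>\<alpha> N \<Longrightarrow> M \<bullet> \<sigma> = N \<bullet> \<sigma>"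
proof (induction arbitrary: \<sigma> rule: alpha.induct)
  case (a_lam A A' y x M x' M')
  then show ?case
    using common_renaming_fv[OF a_lam.hyps(2-4)] common_renaming_sapp[OF a_lam.hyps(2-4)]
    by (simp add: Let_def)
next
  case (a_pi A A' y x M x' M')
  then show ?case
    using common_renaming_fv[OF a_pi.hyps(2-4)] common_renaming_sapp[OF a_pi.hyps(2-4)]
    by (simp add: Let_def)
qed simp_all

lemma alpha_refl: "M =\<^sub>\<alpha> M"
proof (induction M)
  case (Lam x A M)
  show ?case by (rule a_lam[OF Lam.IH(1) Xp_fresh Xp_fresh refl])
next
  case (Pi x A M)
  show ?case by (rule a_pi[OF Pi.IH(1) Xp_fresh Xp_fresh refl])
qed (auto intro: alpha.intros)

lemma alpha_Lam_cong: "A =\<^sub>\<alpha> A' \<Longrightarrow> M =\<^sub>\<alpha> M' \<Longrightarrow> Lam y A M =\<^sub>\<alpha> Lam y A' M'"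
  by (rule a_lam[where y = y]) (auto simp: subst1_def intro: alpha_sapp)

lemma alpha_Pi_cong: "A =\<^sub>\<alpha> A' \<Longrightarrow> M =\<^sub>\<alpha> M' \<Longrightarrow> Pi y A M =\<^sub>\<alpha> Pi y A' M'"
  by (rule a_pi[where y = y]) (auto simp: subst1_def intro: alpha_sapp)

lemma alpha_sapp_cong: "(\<And>z. z \<in> set (fv M) \<Longrightarrow> \<sigma> z =\<^sub>\<alpha> \<tau> z) \<Longrightarrow> M \<bullet> \<sigma> =\<^sub>\<alpha> M \<bullet> \<tau>"
proof (induction M arbitrary: \<sigma> \<tau>)
  case (App M N)
  then show ?case by (auto intro!: a_app)
next
  case (Lam x A M)
  have "fresh_binder \<sigma> x M = fresh_binder \<tau> x M" using Lam.prems by (auto intro!: Xs_cong alpha_fv)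
  moreover have "A \<bullet> \<sigma> =\<^sub>\<alpha> A \<bullet> \<tau>" "M \<bullet> supd \<sigma> x P =\<^sub>\<alpha> M \<bullet> supd \<tau> x P" for P
    using Lam.prems by (auto simp: supd_def alpha_refl intro!: Lam.IH)
  ultimately show ?case by (simp add: Let_def alpha_Lam_cong)
next
  case (Pi x A M)
  have "fresh_binder \<sigma> x M = fresh_binder \<tau> x M" using Pi.prems by (auto intro!: Xs_cong alpha_fv)
  moreover have "A \<bullet> \<sigma> =\<^sub>\<alpha> A \<bullet> \<tau>" "M \<bullet> supd \<sigma> x P =\<^sub>\<alpha> M \<bullet> supd \<tau> x P" for P
    using Pi.prems by (auto simp: supd_def alpha_refl intro!: Pi.IH)
  ultimately show ?case by (simp add: Let_def alpha_Pi_cong)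
qed (simp_all add: alpha_refl)

lemma alpha_LamE:
  assumes "Lam x A M =\<^sub>\<alpha> N"
  obtains x' A' M' where "N = Lam x' A' M'" and "A =\<^sub>\<alpha> A'"
    and "\<And>z. M[x ::= Var z] = M'[x' ::= Var z]"
  using assms by cases (blast intro: common_renaming_subst)

lemma alpha_PiE:
  assumes "Pi x A M =\<^sub>\<alpha> N"
  obtains x' A' M' where "N = Pi x' A' M'" and "A =\<^sub>\<alpha> A'"
    and "\<And>z. M[x ::= Var z] = M'[x' ::= Var z]"
  using assms by cases (blast intro: common_renaming_subst)

inductive_cases alpha_ConstE: "Const k =\<^sub>\<alpha> N"
inductive_cases alpha_VarE: "Var x =\<^sub>\<alpha> N"
inductive_cases alpha_AppE: "App M N =\<^sub>\<alpha> P"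

lemma betaconv_if_alpha: "B =\<^sub>\<alpha> A \<Longrightarrow> A \<simeq>\<^sub>\<beta> B"
  unfolding betaconv_def by (rule converse_r_into_equivclp) simp

end

section \<open>Typing is invariant under alpha-conversion\<close>

context pts_signature
begin

lemma ctx_alpha_Nil [simp]: "[] \<approx>\<^sub>\<alpha> \<Delta> \<longleftrightarrow> \<Delta> = []"
  by (simp add: ctx_alpha_def)

lemma ctx_alpha_Cons [simp]:
  "(x, A) # \<Gamma> \<approx>\<^sub>\<alpha> (y, B) # \<Delta> \<longleftrightarrow> x = y \<and> A =\<^sub>\<alpha> B \<and> \<Gamma> \<approx>\<^sub>\<alpha> \<Delta>"
  by (simp add: ctx_alpha_def)

lemma ctx_alpha_ConsE:
  assumes "(x, A) # \<Gamma> \<approx>\<^sub>\<alpha> \<Delta>"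
  obtains B \<Delta>' where "\<Delta> = (x, B) # \<Delta>'" and "A =\<^sub>\<alpha> B" and "\<Gamma> \<approx>\<^sub>\<alpha> \<Delta>'"
  using assms unfolding ctx_alpha_def by (cases \<Delta>) auto

lemma ctx_alpha_dom: "\<Gamma> \<approx>\<^sub>\<alpha> \<Delta> \<Longrightarrow> map fst \<Delta> = map fst \<Gamma>"
  unfolding ctx_alpha_def by (induction rule: list_all2_induct) auto

lemma ctx_alpha_member:
  "\<Gamma> \<approx>\<^sub>\<alpha> \<Delta> \<Longrightarrow> (x, A) \<in> set \<Gamma> \<Longrightarrow> \<exists>B. (x, B) \<in> set \<Delta> \<and> A =\<^sub>\<alpha> B"
  unfolding ctx_alpha_def by (induction rule: list_all2_induct) auto

lemma typing_weaken:
  "\<Gamma> \<turnstile> M : A \<Longrightarrow> set \<Gamma> \<subseteq> set \<Gamma>' \<Longrightarrow> ok \<Gamma>' \<Longrightarrow> \<Gamma>' \<turnstile> M : A"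
proof (induction arbitrary: \<Gamma>' rule: ctx_ok_typing.inducts(2)[where ?P1.0="\<lambda>_. True"])
  case (t_prod s1 s2 s3 \<Gamma> A B x)
  have A: "\<Gamma>' \<turnstile> A : Const s1" using t_prod.IH(1) t_prod.prems by blast
  have "(y, A) # \<Gamma>' \<turnstile> B[x ::= Var y] : Const s2" if y: "y \<notin> set (map fst \<Gamma>')" for y
  proof -
    have "y \<notin> set (map fst \<Gamma>)" using y t_prod.prems(1) by force
    moreover have "ok ((y, A) # \<Gamma>')" using t_cons[OF t_prod.prems(2) A y] .
    moreover have "set ((y, A) # \<Gamma>) \<subseteq> set ((y, A) # \<Gamma>')" using t_prod.prems(1) by auto
    ultimately show ?thesis using t_prod.IH(2) by blast
  qed
  with A t_prod(1) show ?case by (blast intro: ctx_ok_typing.t_prod)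
next
  case (t_abs s1 s2 s3 \<Gamma> A B y M x)
  have A: "\<Gamma>' \<turnstile> A : Const s1" using t_abs.IH(1) t_abs.prems by blast
  have "(z, A) # \<Gamma>' \<turnstile> B[y ::= Var z] : Const s2"
    and "(z, A) # \<Gamma>' \<turnstile> M[x ::= Var z] : B[y ::= Var z]"
    if z: "z \<notin> set (map fst \<Gamma>')" for z
  proof -
    have "z \<notin> set (map fst \<Gamma>)" using z t_abs.prems(1) by force
    moreover have "ok ((z, A) # \<Gamma>')" using t_cons[OF t_abs.prems(2) A z] .
    moreover have "set ((z, A) # \<Gamma>) \<subseteq> set ((z, A) # \<Gamma>')" using t_abs.prems(1) by auto
    ultimately show "(z, A) # \<Gamma>' \<turnstile> B[y ::= Var z] : Const s2"
      and "(z, A) # \<Gamma>' \<turnstile> M[x ::= Var z] : B[y ::= Var z]"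
      using t_abs.IH(2,3) by blast+
  qed
  with A t_abs(1) show ?case by (blast intro: ctx_ok_typing.t_abs)
qed (blast intro: ctx_ok_typing.intros)+

end

context pts
begin

definition alpha_invariant :: "('c, 'v) ctx \<Rightarrow> ('c, 'v) trm \<Rightarrow> ('c, 'v) trm \<Rightarrow> bool" where
  "alpha_invariant \<Gamma> M A \<longleftrightarrow> (\<forall>\<Delta> N. \<Gamma> \<approx>\<^sub>\<alpha> \<Delta> \<longrightarrow> M =\<^sub>\<alpha> N \<longrightarrow> \<Delta> \<turnstile> N : A)"

definition ctx_alpha_invariant :: "('c, 'v) ctx \<Rightarrow> bool" where
  "ctx_alpha_invariant \<Gamma> \<longleftrightarrow>
     (\<forall>\<Delta>. \<Gamma> \<approx>\<^sub>\<alpha> \<Delta> \<longrightarrow> ok \<Delta> \<and> (\<forall>(x, A) \<in> set \<Gamma>. \<exists>s. \<Delta> \<turnstile> A : Const s))"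

lemma alpha_invariantD: "alpha_invariant \<Gamma> M A \<Longrightarrow> \<Gamma> \<approx>\<^sub>\<alpha> \<Delta> \<Longrightarrow> M =\<^sub>\<alpha> N \<Longrightarrow> \<Delta> \<turnstile> N : A"
  unfolding alpha_invariant_def by blast

lemma alpha_invariant_ctxD: "alpha_invariant \<Gamma> M A \<Longrightarrow> \<Gamma> \<approx>\<^sub>\<alpha> \<Delta> \<Longrightarrow> \<Delta> \<turnstile> M : A"
  using alpha_invariantD alpha_refl by blast

lemma alpha_invariant_ConsD:
  "alpha_invariant ((y, A) # \<Gamma>) M T \<Longrightarrow> \<Gamma> \<approx>\<^sub>\<alpha> \<Delta> \<Longrightarrow> A =\<^sub>\<alpha> A' \<Longrightarrow> (y, A') # \<Delta> \<turnstile> M : T"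
  by (simp add: alpha_invariant_ctxD)

lemma ctx_alpha_invariant_Nil: "ctx_alpha_invariant []"
  by (simp add: ctx_alpha_invariant_def t_nil)

lemma ctx_alpha_invariant_Cons:
  assumes \<Gamma>: "ctx_alpha_invariant \<Gamma>" and A: "alpha_invariant \<Gamma> A (Const s)"
    and x: "x \<notin> set (map fst \<Gamma>)"
  shows "ctx_alpha_invariant ((x, A) # \<Gamma>)"
  unfolding ctx_alpha_invariant_def
proof (intro allI impI)
  fix \<Delta> assume "(x, A) # \<Gamma> \<approx>\<^sub>\<alpha> \<Delta>"
  then obtain B \<Delta>' where \<Delta>: "\<Delta> = (x, B) # \<Delta>'" and "A =\<^sub>\<alpha> B" and "\<Gamma> \<approx>\<^sub>\<alpha> \<Delta>'"
    by (rule ctx_alpha_ConsE)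
  have ok': "ok \<Delta>'" and sorts': "\<forall>(x, A) \<in> set \<Gamma>. \<exists>s. \<Delta>' \<turnstile> A : Const s"
    using \<Gamma> \<open>\<Gamma> \<approx>\<^sub>\<alpha> \<Delta>'\<close> unfolding ctx_alpha_invariant_def by blast+
  have "\<Delta>' \<turnstile> B : Const s" using A \<open>\<Gamma> \<approx>\<^sub>\<alpha> \<Delta>'\<close> \<open>A =\<^sub>\<alpha> B\<close> by (rule alpha_invariantD)
  moreover have "x \<notin> set (map fst \<Delta>')" using x ctx_alpha_dom[OF \<open>\<Gamma> \<approx>\<^sub>\<alpha> \<Delta>'\<close>] by simp
  ultimately have ok: "ok \<Delta>" unfolding \<Delta> by (rule t_cons[OF ok'])
  have "\<Delta>' \<turnstile> A : Const s" using A \<open>\<Gamma> \<approx>\<^sub>\<alpha> \<Delta>'\<close> by (rule alpha_invariant_ctxD)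
  with sorts' typing_weaken[OF _ _ ok] have "\<forall>(y, C) \<in> set ((x, A) # \<Gamma>). \<exists>s. \<Delta> \<turnstile> C : Const s"
    unfolding \<Delta> by fastforce
  with ok show "ok \<Delta> \<and> (\<forall>(y, C) \<in> set ((x, A) # \<Gamma>). \<exists>s. \<Delta> \<turnstile> C : Const s)" by blast
qed

lemma alpha_invariant_sort:
  "ctx_alpha_invariant \<Gamma> \<Longrightarrow> Ax s1 s2 \<Longrightarrow> alpha_invariant \<Gamma> (Const s1) (Const s2)"
  unfolding alpha_invariant_def ctx_alpha_invariant_def by (auto elim: alpha_ConstE intro: t_sort)

lemma alpha_invariant_var:
  assumes \<Gamma>: "ctx_alpha_invariant \<Gamma>" and x: "(x, A) \<in> set \<Gamma>"
  shows "alpha_invariant \<Gamma> (Var x) A"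
  unfolding alpha_invariant_def
proof (intro allI impI)
  fix \<Delta> N assume \<Delta>: "\<Gamma> \<approx>\<^sub>\<alpha> \<Delta>" and "Var x =\<^sub>\<alpha> N"
  then have N: "N = Var x" by (auto elim: alpha_VarE)
  obtain B where B: "(x, B) \<in> set \<Delta>" and "A =\<^sub>\<alpha> B" using ctx_alpha_member[OF \<Delta> x] by blast
  from \<Gamma> \<Delta> x obtain s where ok: "ok \<Delta>" and "\<Delta> \<turnstile> A : Const s"
    unfolding ctx_alpha_invariant_def by blast
  from ok B have "\<Delta> \<turnstile> Var x : B" by (rule t_var)
  then show "\<Delta> \<turnstile> N : A"
    unfolding N using betaconv_if_alpha[OF \<open>A =\<^sub>\<alpha> B\<close>] \<open>\<Delta> \<turnstile> A : Const s\<close> by (rule t_conv)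
qed

lemma alpha_invariant_prod:
  assumes Rl: "Rl s1 s2 s3" and A: "alpha_invariant \<Gamma> A (Const s1)"
    and B: "\<forall>y. y \<notin> set (map fst \<Gamma>) \<longrightarrow> alpha_invariant ((y, A) # \<Gamma>) (B[x ::= Var y]) (Const s2)"
  shows "alpha_invariant \<Gamma> (Pi x A B) (Const s3)"
  unfolding alpha_invariant_def
proof (intro allI impI)
  fix \<Delta> N assume \<Delta>: "\<Gamma> \<approx>\<^sub>\<alpha> \<Delta>" and "Pi x A B =\<^sub>\<alpha> N"
  from this(2) obtain x' A' B' where N: "N = Pi x' A' B'" and "A =\<^sub>\<alpha> A'"
    and body: "\<And>y. B[x ::= Var y] = B'[x' ::= Var y]"
    by (erule alpha_PiE)
  have "\<Delta> \<turnstile> A' : Const s1" using A \<Delta> \<open>A =\<^sub>\<alpha> A'\<close> by (rule alpha_invariantD)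
  moreover have "\<forall>y. y \<notin> set (map fst \<Delta>) \<longrightarrow> (y, A') # \<Delta> \<turnstile> B'[x' ::= Var y] : Const s2"
    using B ctx_alpha_dom[OF \<Delta>] alpha_invariant_ConsD[OF _ \<Delta> \<open>A =\<^sub>\<alpha> A'\<close>] by (simp add: body)
  ultimately show "\<Delta> \<turnstile> N : Const s3" unfolding N by (rule t_prod[where Rl = Rl, OF Rl])
qed

lemma alpha_invariant_abs:
  assumes Rl: "Rl s1 s2 s3" and A: "alpha_invariant \<Gamma> A (Const s1)"
    and B: "\<forall>z. z \<notin> set (map fst \<Gamma>) \<longrightarrow> alpha_invariant ((z, A) # \<Gamma>) (B[y ::= Var z]) (Const s2)"
    and M: "\<forall>z. z \<notin> set (map fst \<Gamma>) \<longrightarrow>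
      alpha_invariant ((z, A) # \<Gamma>) (M[x ::= Var z]) (B[y ::= Var z])"
  shows "alpha_invariant \<Gamma> (Lam x A M) (Pi y A B)"
  unfolding alpha_invariant_def
proof (intro allI impI)
  fix \<Delta> N assume \<Delta>: "\<Gamma> \<approx>\<^sub>\<alpha> \<Delta>" and "Lam x A M =\<^sub>\<alpha> N"
  from this(2) obtain x' A' M' where N: "N = Lam x' A' M'" and "A =\<^sub>\<alpha> A'"
    and body: "\<And>z. M[x ::= Var z] = M'[x' ::= Var z]"
    by (erule alpha_LamE)
  have "\<Delta> \<turnstile> A' : Const s1" using A \<Delta> \<open>A =\<^sub>\<alpha> A'\<close> by (rule alpha_invariantD)
  moreover have "\<forall>z. z \<notin> set (map fst \<Delta>) \<longrightarrow> (z, A') # \<Delta> \<turnstile> B[y ::= Var z] : Const s2"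
    using B ctx_alpha_dom[OF \<Delta>] alpha_invariant_ConsD[OF _ \<Delta> \<open>A =\<^sub>\<alpha> A'\<close>] by simp
  moreover have "\<forall>z. z \<notin> set (map fst \<Delta>) \<longrightarrow> (z, A') # \<Delta> \<turnstile> M'[x' ::= Var z] : B[y ::= Var z]"
    using M ctx_alpha_dom[OF \<Delta>] alpha_invariant_ConsD[OF _ \<Delta> \<open>A =\<^sub>\<alpha> A'\<close>] by (simp add: body)
  \<comment> \<open>(abs) forces the domain of the product to be the new \<open>A'\<close>; (conv) restores \<open>A\<close>.\<close>
  ultimately have "\<Delta> \<turnstile> N : Pi y A' B" unfolding N by (rule t_abs[where Rl = Rl, OF Rl])
  moreover have "Pi y A' B \<simeq>\<^sub>\<beta> Pi y A B"
    by (intro betaconv_if_alpha alpha_Pi_cong \<open>A =\<^sub>\<alpha> A'\<close> alpha_refl)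
  moreover have "\<Delta> \<turnstile> Pi y A B : Const s3"
    using alpha_invariant_prod[OF Rl A B] \<Delta> by (rule alpha_invariant_ctxD)
  ultimately show "\<Delta> \<turnstile> N : Pi y A B" by (rule t_conv)
qed

lemma alpha_invariant_app:
  assumes M: "alpha_invariant \<Gamma> M (Pi x A B)" and N: "alpha_invariant \<Gamma> N A"
    and B: "alpha_invariant \<Gamma> (B[x ::= N]) (Const s)"
  shows "alpha_invariant \<Gamma> (App M N) (B[x ::= N])"
  unfolding alpha_invariant_def
proof (intro allI impI)
  fix \<Delta> P assume \<Delta>: "\<Gamma> \<approx>\<^sub>\<alpha> \<Delta>" and "App M N =\<^sub>\<alpha> P"
  from this(2) obtain M' N' where P: "P = App M' N'" and "M =\<^sub>\<alpha> M'" and "N =\<^sub>\<alpha> N'"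
    by (erule alpha_AppE)
  have "B[x ::= N] =\<^sub>\<alpha> B[x ::= N']"
    unfolding subst1_def by (rule alpha_sapp_cong) (simp add: supd_def \<open>N =\<^sub>\<alpha> N'\<close> alpha_refl)
  have "\<Delta> \<turnstile> App M' N' : B[x ::= N']"
  proof (rule t_app)
    show "\<Delta> \<turnstile> M' : Pi x A B" using M \<Delta> \<open>M =\<^sub>\<alpha> M'\<close> by (rule alpha_invariantD)
    show "\<Delta> \<turnstile> N' : A" using N \<Delta> \<open>N =\<^sub>\<alpha> N'\<close> by (rule alpha_invariantD)
    show "\<Delta> \<turnstile> B[x ::= N'] : Const s"
      using B \<Delta> \<open>B[x ::= N] =\<^sub>\<alpha> B[x ::= N']\<close> by (rule alpha_invariantD)
  qed
  moreover have "\<Delta> \<turnstile> B[x ::= N] : Const s" using B \<Delta> by (rule alpha_invariant_ctxD)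
  ultimately show "\<Delta> \<turnstile> P : B[x ::= N]"
    unfolding P using betaconv_if_alpha[OF \<open>B[x ::= N] =\<^sub>\<alpha> B[x ::= N']\<close>] by (blast intro: t_conv)
qed

lemma alpha_invariant_conv:
  "alpha_invariant \<Gamma> M A \<Longrightarrow> A \<simeq>\<^sub>\<beta> B \<Longrightarrow> alpha_invariant \<Gamma> B (Const s) \<Longrightarrow> alpha_invariant \<Gamma> M B"
  unfolding alpha_invariant_def using alpha_refl by (blast intro: t_conv)

theorem derivations_alpha_invariant:
  shows ctx_ok_alpha_invariant: "ok \<Gamma> \<Longrightarrow> ctx_alpha_invariant \<Gamma>"
    and typing_alpha_invariant: "\<Gamma> \<turnstile> M : A \<Longrightarrow> alpha_invariant \<Gamma> M A"
proof (induction rule: ctx_ok_typing.inducts)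
  case t_nil
  show ?case by (rule ctx_alpha_invariant_Nil)
next
  case (t_cons \<Gamma> A s x)
  then show ?case by (blast intro: ctx_alpha_invariant_Cons)
next
  case (t_sort \<Gamma> s1 s2)
  then show ?case by (blast intro: alpha_invariant_sort)
next
  case (t_var \<Gamma> x A)
  then show ?case by (blast intro: alpha_invariant_var)
next
  case (t_prod s1 s2 s3 \<Gamma> A B x)
  then show ?case by (blast intro: alpha_invariant_prod)
next
  case (t_abs s1 s2 s3 \<Gamma> A B y M x)
  then show ?case by (blast intro: alpha_invariant_abs)
next
  case (t_app \<Gamma> M x A B N s)
  then show ?case by (blast intro: alpha_invariant_app)
next
  case (t_conv \<Gamma> M A B s)
  then show ?case by (blast intro: alpha_invariant_conv)
qed

end

theorem mainTheorem14:
  fixes enc :: "'v \<Rightarrow> nat" and dec :: "nat \<Rightarrow> 'v" and chi :: "nat list \<Rightarrow> nat"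
    and Ax :: "'c \<Rightarrow> 'c \<Rightarrow> bool" and Rl :: "'c \<Rightarrow> 'c \<Rightarrow> 'c \<Rightarrow> bool"
  assumes enc_dec: "\<forall>n. enc (dec n) = n"
    and chi_fresh: "\<forall>ns. chi ns \<notin> set ns"
  shows "(\<forall>(\<Gamma>::('c, 'v) ctx) \<Delta>. ctx_alpha enc dec chi \<Gamma> \<Delta> \<and> ctx_ok enc dec chi Ax Rl \<Gamma>
            \<longrightarrow> ctx_ok enc dec chi Ax Rl \<Delta>)
       \<and> (\<forall>(\<Gamma>::('c, 'v) ctx) \<Delta> M N A. ctx_alpha enc dec chi \<Gamma> \<Delta> \<and> alpha enc dec chi M N
            \<and> typing enc dec chi Ax Rl \<Gamma> M A \<longrightarrow> typing enc dec chi Ax Rl \<Delta> N A)"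
proof -
  interpret pts enc dec chi Ax Rl
    using assms by unfold_locales blast+
  show ?thesis
    using ctx_ok_alpha_invariant typing_alpha_invariant
    unfolding ctx_alpha_invariant_def alpha_invariant_def by blast
qed

end
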